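(* $\{\omega \cdot 2, \omega^\star \cdot 2\} \leq_c \{\omega^2, (\omega^2)^\star\}$.
   Context: Structures have domains contained in $\omega$. For countable structures $\mathcal{A},\mathcal{B}$, the class $\{\mathcal{A},\mathcal{B}\}$ denotes the class of all structures (with domain $\subseteq\omega$) isomorphic to $\mathcal{A}$ or to $\mathcal{B}$. Linear orders are in the language $\{<\}$; $L^\star$ is the reverse of a linear order $L$; $\omega\cdot 2$, $\omega^2$ are ordinal order types. An enumeration operator $\Gamma$ is a c.e. set of pairs $(\alpha,\varphi)$ with $\alpha$ a finite set of basic (atomic or negated atomic) sentences of the input language with constants from $\omega$ and $\varphi$ a basic sentence of the output language with constants from $\omega$; $\Gamma(X)=\{\varphi : (\alpha,\varphi)\in\Gamma,\ \alpha\subseteq X\}$. $\Gamma$ is a computable embedding of $\mathcal{K}_0$ into $\mathcal{K}_1$ ($\mathcal{K}_0\leq_c\mathcal{K}_1$) if for every $\mathcal{A}\in\mathcal{K}_0$, $\Gamma$ applied to the atomic diagram of $\mathcal{A}$ is the atomic diagram of a structure $\Gamma(\mathcal{A})\in\mathcal{K}_1$, and for all $\mathcal{A},\mathcal{B}\in\mathcal{K}_0$, $\mathcal{A}\cong\mathcal{B}$ iff $\Gamma(\mathcal{A})\cong\Gamma(\mathcal{B})$. *)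

theory Defs
  imports Main "HOL-Library.Nat_Bijection"
begin

datatype recf = Z | S | Id nat | Cn recf "recf list" | Pr recf recf | Mn recf

inductive eval :: "recf \<Rightarrow> nat list \<Rightarrow> nat \<Rightarrow> bool" where
  eval_Z: "eval Z xs 0"
| eval_S: "eval S (x # xs) (Suc x)"
| eval_Id: "i < length xs \<Longrightarrow> eval (Id i) xs (xs ! i)"
| eval_Cn: "length ys = length gs \<Longrightarrow> (\<forall>i < length gs. eval (gs ! i) xs (ys ! i))
            \<Longrightarrow> eval f ys v \<Longrightarrow> eval (Cn f gs) xs v"
| eval_Pr0: "eval f xs v \<Longrightarrow> eval (Pr f g) (0 # xs) v"
| eval_PrS: "eval (Pr f g) (n # xs) u \<Longrightarrow> eval g (n # u # xs) v
            \<Longrightarrow> eval (Pr f g) (Suc n # xs) v"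
| eval_Mn: "eval f (n # xs) 0 \<Longrightarrow> (\<forall>m < n. \<exists>u. eval f (m # xs) u \<and> 0 < u)
            \<Longrightarrow> eval (Mn f) xs n"

definition ce :: "nat set \<Rightarrow> bool" where
  "ce W \<longleftrightarrow> (\<exists>f. W = {n. \<exists>v. eval f [n] v})"

datatype atom = Lt nat nat | Eq nat nat
datatype basic = Pos atom | Neg atom

fun atom_code :: "atom \<Rightarrow> nat" where
  "atom_code (Lt a b) = prod_encode (0, prod_encode (a, b))"
| "atom_code (Eq a b) = prod_encode (1, prod_encode (a, b))"

fun basic_code :: "basic \<Rightarrow> nat" where
  "basic_code (Pos s) = 2 * atom_code s"
| "basic_code (Neg s) = 2 * atom_code s + 1"

definition pair_code :: "basic set \<Rightarrow> basic \<Rightarrow> nat" where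
  "pair_code \<alpha> \<phi> = prod_encode (set_encode (basic_code ` \<alpha>), basic_code \<phi>)"

type_synonym struc = "nat set \<times> (nat \<times> nat) set"

definition is_structure :: "struc \<Rightarrow> bool" where
  "is_structure A \<longleftrightarrow> snd A \<subseteq> fst A \<times> fst A"

definition iso :: "struc \<Rightarrow> struc \<Rightarrow> bool" where
  "iso A B \<longleftrightarrow> (\<exists>f. bij_betw f (fst A) (fst B) \<and>
     (\<forall>x\<in>fst A. \<forall>y\<in>fst A. (x, y) \<in> snd A \<longleftrightarrow> (f x, f y) \<in> snd B))"

fun holds :: "struc \<Rightarrow> basic \<Rightarrow> bool" where
  "holds A (Pos (Lt a b)) \<longleftrightarrow> a \<in> fst A \<and> b \<in> fst A \<and> (a, b) \<in> snd A"
| "holds A (Neg (Lt a b)) \<longleftrightarrow> a \<in> fst A \<and> b \<in> fst A \<and> (a, b) \<notin> snd A"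
| "holds A (Pos (Eq a b)) \<longleftrightarrow> a \<in> fst A \<and> b \<in> fst A \<and> a = b"
| "holds A (Neg (Eq a b)) \<longleftrightarrow> a \<in> fst A \<and> b \<in> fst A \<and> a \<noteq> b"

definition diag :: "struc \<Rightarrow> basic set" where
  "diag A = {\<phi>. holds A \<phi>}"

definition enum_apply :: "nat set \<Rightarrow> basic set \<Rightarrow> basic set" where
  "enum_apply W X = {\<phi>. \<exists>\<alpha>. finite \<alpha> \<and> \<alpha> \<subseteq> X \<and> pair_code \<alpha> \<phi> \<in> W}"

definition computable_embedding :: "nat set \<Rightarrow> struc set \<Rightarrow> struc set \<Rightarrow> bool" where
  "computable_embedding W K0 K1 \<longleftrightarrow> ce W \<and>
     (\<forall>A\<in>K0. \<exists>B\<in>K1. enum_apply W (diag A) = diag B) \<and>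
     (\<forall>A\<in>K0. \<forall>A'\<in>K0. \<forall>B B'. is_structure B \<longrightarrow> is_structure B' \<longrightarrow>
        enum_apply W (diag A) = diag B \<longrightarrow> enum_apply W (diag A') = diag B' \<longrightarrow>
        (iso A A' \<longleftrightarrow> iso B B'))"

definition c_leq :: "struc set \<Rightarrow> struc set \<Rightarrow> bool" (infix "\<le>\<^sub>c" 50) where
  "K0 \<le>\<^sub>c K1 \<longleftrightarrow> (\<exists>W. computable_embedding W K0 K1)"

definition class2 :: "struc \<Rightarrow> struc \<Rightarrow> struc set" where
  "class2 A B = {C. is_structure C \<and> (iso C A \<or> iso C B)}"

text \<open>omega*2: n corresponds to the element (n mod 2, n div 2) ordered lexicographically.\<close>
definition omega_times_2 :: struc where
  "omega_times_2 = (UNIV, {(a, b). a mod 2 < b mod 2 \<or> (a mod 2 = b mod 2 \<and> a div 2 < b div 2)})"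

text \<open>omega^star * 2 = omega^star + omega^star: two copies of the reverse of omega.\<close>
definition omega_star_times_2 :: struc where
  "omega_star_times_2 = (UNIV, {(a, b). a mod 2 < b mod 2 \<or> (a mod 2 = b mod 2 \<and> b div 2 < a div 2)})"

text \<open>omega^2: n corresponds to prod_decode n, ordered lexicographically.\<close>
definition omega_squared :: struc where
  "omega_squared = (UNIV, {(a, b). fst (prod_decode a) < fst (prod_decode b) \<or>
      (fst (prod_decode a) = fst (prod_decode b) \<and> snd (prod_decode a) < snd (prod_decode b))})"

definition rev_order :: "struc \<Rightarrow> struc" where
  "rev_order L = (fst L, (snd L)\<inverse>)"

end

(* The embedding sends a linear order A to the pairs (y, x) with y < x in A, ordered first by x and
   then by y, keeping only those pairs for which some successor z of x in A satisfies y < z as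
   natural numbers.
   For A of type omega*2 the side condition is vacuous: each x of the first copy contributes
   finitely many pairs, each x of the second copy a block of type omega (plus finitely many pairs),
   so the result has type omega + omega*omega = omega^2.
   For A of type omega^star*2 each x of the first copy contributes a block of type omega^star, and
   these blocks are arranged along omega^star; an x of the second copy has only finitely many
   successors, so the side condition leaves it finitely many pairs.  The result has type
   (omega^2)^star followed by finite blocks arranged along omega^star, which is again (omega^2)^star.
   Membership of a pair, the side condition and the order between two pairs are each witnessed by
   finitely many atomic facts about A, which makes the map a computable enumeration operator; the
   two target types are told apart by the existence of a least element. *)

theory Submission
  imports Defs "HOL-Library.Infinite_Set"
begin

section \<open>Total computable functions\<close>

inductive_cases eval_Z_cases: "eval Z xs v"
inductive_cases eval_S_cases: "eval S xs v"
inductive_cases eval_Id_cases: "eval (Id i) xs v"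
inductive_cases eval_Cn_cases: "eval (Cn f gs) xs v"
inductive_cases eval_Pr_cases: "eval (Pr f g) xs v"
inductive_cases eval_Mn_cases: "eval (Mn f) xs v"

lemma eval_deterministic: "eval f xs u \<Longrightarrow> eval f xs v \<Longrightarrow> u = v"
proof (induction arbitrary: v rule: eval.induct)
  case (eval_Z xs)
  then show ?case by (auto elim: eval_Z_cases)
next
  case (eval_S x xs)
  then show ?case by (auto elim: eval_S_cases)
next
  case (eval_Id i xs)
  then show ?case by (auto elim: eval_Id_cases)
next
  case (eval_Cn ys gs xs f w)
  from eval_Cn.prems obtain ys' where ys': "length ys' = length gs"
    "\<forall>i<length gs. eval (gs ! i) xs (ys' ! i)" "eval f ys' v"
    by (auto elim: eval_Cn_cases)
  have "ys' = ys"
    by (rule nth_equalityI) (use ys' eval_Cn.hyps eval_Cn.IH in auto)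
  then show ?case using eval_Cn.IH ys' by auto
next
  case (eval_Pr0 f xs w g)
  from eval_Pr0.prems show ?case by (auto elim: eval_Pr_cases intro: eval_Pr0.IH)
next
  case (eval_PrS f g n xs u w)
  from eval_PrS.prems obtain u' where "eval (Pr f g) (n # xs) u'" "eval g (n # u' # xs) v"
    by (auto elim: eval_Pr_cases)
  then show ?case using eval_PrS.IH by auto
next
  case (eval_Mn f n xs)
  from eval_Mn.prems have v0: "eval f (v # xs) 0" and vpos: "\<forall>m<v. \<exists>u. eval f (m # xs) u \<and> 0 < u"
    by (auto elim: eval_Mn_cases)
  have "\<not> n < v"
    using vpos eval_Mn.IH(1) by fastforce
  moreover have "\<not> v < n"
    using v0 eval_Mn.IH(2) by fastforce
  ultimately show ?case by simp
qed

definition computes :: "recf \<Rightarrow> nat \<Rightarrow> (nat list \<Rightarrow> nat) \<Rightarrow> bool" where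
  "computes P k F \<longleftrightarrow> (\<forall>xs. length xs = k \<longrightarrow> eval P xs (F xs))"

definition computable :: "nat \<Rightarrow> (nat list \<Rightarrow> nat) \<Rightarrow> bool" where
  "computable k F \<longleftrightarrow> (\<exists>P. computes P k F)"

lemma computable_cong:
  assumes "computable k F" and "\<And>xs. length xs = k \<Longrightarrow> F xs = G xs"
  shows "computable k G"
  using assms unfolding computable_def computes_def by metis

lemma computable_zero: "computable k (\<lambda>_. 0)"
  unfolding computable_def computes_def by (blast intro: eval_Z)

lemma computable_nth: "i < k \<Longrightarrow> computable k (\<lambda>xs. xs ! i)"
  unfolding computable_def computes_def by (blast intro: eval_Id)

lemma computable_comp:
  assumes "computable (length Gs) F" and "list_all (computable k) Gs"
  shows "computable k (\<lambda>xs. F (map (\<lambda>G. G xs) Gs))"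
proof -
  obtain P where P: "computes P (length Gs) F"
    using assms(1) unfolding computable_def by blast
  obtain Ps where Ps: "list_all2 (\<lambda>Q G. computes Q k G) Ps Gs"
    using assms(2) unfolding computable_def
    by (induction Gs) (auto intro: list_all2_Cons)
  have "eval (Cn P Ps) xs (F (map (\<lambda>G. G xs) Gs))" if "length xs = k" for xs
    using P Ps that
    by (intro eval_Cn[where ys = "map (\<lambda>G. G xs) Gs"]) (auto simp: computes_def list_all2_conv_all_nth)
  then show ?thesis
    unfolding computable_def computes_def by blast
qed

lemma computable_prim_rec:
  assumes "computable k F" and "computable (k + 2) G"
    and "\<And>ys. length ys = k \<Longrightarrow> H (0 # ys) = F ys"
    and "\<And>n ys. length ys = k \<Longrightarrow> H (Suc n # ys) = G (n # H (n # ys) # ys)"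
  shows "computable (k + 1) H"
proof -
  obtain P Q where P: "computes P k F" and Q: "computes Q (k + 2) G"
    using assms(1,2) unfolding computable_def by blast
  have eval_Pr: "eval (Pr P Q) (n # ys) (H (n # ys))" if "length ys = k" for n ys
  proof (induction n)
    case 0
    show ?case using P that assms(3) by (auto simp: computes_def intro: eval_Pr0)
  next
    case (Suc n)
    have "eval Q (n # H (n # ys) # ys) (G (n # H (n # ys) # ys))"
      using Q that by (simp add: computes_def)
    then show ?case using Suc that assms(4) by (auto intro: eval_PrS)
  qed
  show ?thesis
    unfolding computable_def computes_def
  proof (intro exI allI impI)
    fix xs :: "nat list" assume "length xs = k + 1"
    then obtain n ys where "xs = n # ys" and "length ys = k" by (cases xs) auto
    then show "eval (Pr P Q) xs (H xs)" using eval_Pr by simp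
  qed
qed

lemma ce_exists_zero:
  assumes "computable 2 F"
  shows "ce {n. \<exists>m. F [m, n] = 0}"
proof -
  obtain P where "computes P 2 F"
    using assms unfolding computable_def by blast
  then have P: "eval P [m, n] (F [m, n])" for m n
    unfolding computes_def by (simp add: numeral_2_eq_2)
  have "eval (Mn P) [n] v \<longleftrightarrow> F [v, n] = 0 \<and> (\<forall>m<v. F [m, n] \<noteq> 0)" for n v
  proof
    assume "eval (Mn P) [n] v"
    then have "eval P [v, n] 0" and "\<forall>m<v. \<exists>u. eval P [m, n] u \<and> 0 < u"
      by (auto elim: eval_Mn_cases)
    then show "F [v, n] = 0 \<and> (\<forall>m<v. F [m, n] \<noteq> 0)"
      using P eval_deterministic by (metis less_not_refl)
  next
    assume "F [v, n] = 0 \<and> (\<forall>m<v. F [m, n] \<noteq> 0)"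
    then show "eval (Mn P) [n] v"
      using P[of v n] P by (auto intro!: eval_Mn)
  qed
  then have "(\<exists>v. eval (Mn P) [n] v) \<longleftrightarrow> (\<exists>m. F [m, n] = 0)" for n
    using exists_least_iff[of "\<lambda>m. F [m, n] = 0"] by auto
  then show ?thesis
    unfolding ce_def by blast
qed

lemma computable_comp1:
  "computable 1 F \<Longrightarrow> computable k f \<Longrightarrow> computable k (\<lambda>xs. F [f xs])"
  using computable_comp[of "[f]" F] by simp

lemma computable_comp2:
  "computable 2 F \<Longrightarrow> computable k f \<Longrightarrow> computable k g \<Longrightarrow> computable k (\<lambda>xs. F [f xs, g xs])"
  using computable_comp[of "[f, g]" F] by (simp add: numeral_2_eq_2)

lemma computable_Suc:
  assumes "computable k f"
  shows "computable k (\<lambda>xs. Suc (f xs))"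
proof -
  have "computable 1 (\<lambda>xs. Suc (xs ! 0))"
    unfolding computable_def computes_def
    by (auto intro!: exI[of _ S] eval_S simp: length_Suc_conv)
  from computable_comp1[OF this assms] show ?thesis by simp
qed

lemma computable_const: "computable k (\<lambda>_. n)"
  by (induction n) (auto intro: computable_zero computable_Suc)

lemma computable_add:
  assumes "computable k f" and "computable k g"
  shows "computable k (\<lambda>xs. f xs + g xs)"
proof -
  have "computable 2 (\<lambda>xs. xs ! 0 + xs ! 1)"
    by (rule computable_prim_rec[where k = 1 and F = "\<lambda>ys. ys ! 0" and G = "\<lambda>zs. Suc (zs ! 1)",
          unfolded one_add_one]; (intro computable_nth computable_Suc)?; simp)
  from computable_comp2[OF this assms] show ?thesis by simp
qed

lemma computable_pred:
  assumes "computable k f"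
  shows "computable k (\<lambda>xs. f xs - 1)"
proof -
  have "computable 1 (\<lambda>xs. xs ! 0 - 1)"
    by (rule computable_prim_rec[where k = 0 and F = "\<lambda>_. 0" and G = "\<lambda>zs. zs ! 0",
          unfolded add_0]; (intro computable_nth computable_zero)?; simp)
  from computable_comp1[OF this assms] show ?thesis by simp
qed

lemma computable_diff:
  assumes "computable k f" and "computable k g"
  shows "computable k (\<lambda>xs. f xs - g xs)"
proof -
  have "computable 2 (\<lambda>xs. xs ! 1 - xs ! 0)"
    by (rule computable_prim_rec[where k = 1 and F = "\<lambda>ys. ys ! 0" and G = "\<lambda>zs. zs ! 1 - 1",
          unfolded one_add_one]; (intro computable_pred computable_nth)?; simp)
  from computable_comp2[OF this assms(2,1)] show ?thesis by simp
qed

lemma computable_mult: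
  assumes "computable k f" and "computable k g"
  shows "computable k (\<lambda>xs. f xs * g xs)"
proof -
  have "computable 2 (\<lambda>xs. xs ! 0 * xs ! 1)"
    by (rule computable_prim_rec[where k = 1 and F = "\<lambda>_. 0" and G = "\<lambda>zs. zs ! 1 + zs ! 2",
          unfolded one_add_one]; (intro computable_nth computable_zero computable_add)?; simp)
  from computable_comp2[OF this assms] show ?thesis by simp
qed

lemma computable_power2:
  assumes "computable k f"
  shows "computable k (\<lambda>xs. 2 ^ f xs)"
proof -
  have "computable 1 (\<lambda>xs. 2 ^ xs ! 0)"
    by (rule computable_prim_rec[where k = 0 and F = "\<lambda>_. 1" and G = "\<lambda>zs. zs ! 1 + zs ! 1",
          unfolded add_0]; (intro computable_nth computable_const computable_add)?; simp)
  from computable_comp1[OF this assms] show ?thesis by simp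
qed

lemma computable_if_eq:
  assumes "computable k f" "computable k g" "computable k a" "computable k b"
  shows "computable k (\<lambda>xs. if f xs = g xs then a xs else b xs)"
proof -
  let ?eq = "\<lambda>xs. 1 - ((f xs - g xs) + (g xs - f xs))"
  have "computable k (\<lambda>xs. a xs * ?eq xs + b xs * (1 - ?eq xs))"
    by (intro computable_add computable_mult computable_diff computable_const assms)
  then show ?thesis
    by (rule computable_cong) auto
qed

lemma computable_triangle:
  assumes "computable k f"
  shows "computable k (\<lambda>xs. triangle (f xs))"
proof -
  have "computable 1 (\<lambda>xs. triangle (xs ! 0))"
    by (rule computable_prim_rec[where k = 0 and F = "\<lambda>_. 0" and G = "\<lambda>zs. zs ! 1 + Suc (zs ! 0)",
          unfolded add_0]; (intro computable_nth computable_zero computable_add computable_Suc)?; simp)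
  from computable_comp1[OF this assms] show ?thesis by simp
qed

lemma computable_prod_encode:
  assumes "computable k f" and "computable k g"
  shows "computable k (\<lambda>xs. prod_encode (f xs, g xs))"
  unfolding prod_encode_def using assms
  by (simp add: computable_add computable_triangle)

primrec triangle_root :: "nat \<Rightarrow> nat" where
  "triangle_root 0 = 0"
| "triangle_root (Suc n) = triangle_root n + (if triangle (Suc (triangle_root n)) \<le> Suc n then 1 else 0)"

lemma triangle_root_bounds: "triangle (triangle_root n) \<le> n \<and> n < triangle (Suc (triangle_root n))"
  by (induction n) auto

lemma prod_decode_triangle_root:
  "prod_decode n = (n - triangle (triangle_root n), triangle_root n - (n - triangle (triangle_root n)))"
proof -
  have "prod_encode (n - triangle (triangle_root n), triangle_root n - (n - triangle (triangle_root n))) = n"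
    using triangle_root_bounds[of n] by (auto simp: prod_encode_def)
  then show ?thesis by (metis prod_encode_inverse)
qed

lemma computable_triangle_root: "computable 1 (\<lambda>xs. triangle_root (xs ! 0))"
  by (rule computable_prim_rec[where k = 0 and F = "\<lambda>_. 0"
        and G = "\<lambda>zs. zs ! 1 + (1 - (triangle (Suc (zs ! 1)) - Suc (zs ! 0)))", unfolded add_0];
      (intro computable_nth computable_zero computable_add computable_diff computable_const
        computable_triangle computable_Suc)?; simp)

lemma computable_prod_decode:
  assumes "computable k f"
  shows "computable k (\<lambda>xs. fst (prod_decode (f xs)))"
    and "computable k (\<lambda>xs. snd (prod_decode (f xs)))"
proof -
  have root: "computable k (\<lambda>xs. triangle_root (f xs))"
    using computable_comp1[OF computable_triangle_root assms] by simp
  show "computable k (\<lambda>xs. fst (prod_decode (f xs)))"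
    unfolding prod_decode_triangle_root
    by (simp add: computable_diff computable_triangle root assms)
  show "computable k (\<lambda>xs. snd (prod_decode (f xs)))"
    unfolding prod_decode_triangle_root
    by (simp add: computable_diff computable_triangle root assms)
qed

inductive computable_finset :: "nat \<Rightarrow> (nat list \<Rightarrow> nat set) \<Rightarrow> bool" for k where
  computable_finset_empty: "computable_finset k (\<lambda>_. {})"
| computable_finset_insert:
    "computable k f \<Longrightarrow> computable_finset k X \<Longrightarrow> computable_finset k (\<lambda>xs. insert (f xs) (X xs))"

lemma computable_finset_finite: "computable_finset k X \<Longrightarrow> finite (X xs)"
  by (induction rule: computable_finset.induct) auto

lemma computable_if_mem:
  assumes "computable_finset k X" and "computable k f" "computable k a" "computable k b"
  shows "computable k (\<lambda>xs. if f xs \<in> X xs then a xs else b xs)"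
  using assms(1)
proof (induction rule: computable_finset.induct)
  case computable_finset_empty
  show ?case using assms(4) by simp
next
  case (computable_finset_insert g X)
  have "computable k (\<lambda>xs. if f xs = g xs then a xs else if f xs \<in> X xs then a xs else b xs)"
    by (intro computable_if_eq computable_finset_insert.IH computable_finset_insert.hyps assms(2,3))
  then show ?case
    by (rule computable_cong) auto
qed

lemma computable_set_encode:
  assumes "computable_finset k X"
  shows "computable k (\<lambda>xs. set_encode (X xs))"
  using assms
proof (induction rule: computable_finset.induct)
  case computable_finset_empty
  show ?case using computable_zero by simp
next
  case (computable_finset_insert g X)
  have "computable k (\<lambda>xs. if g xs \<in> X xs then set_encode (X xs) else 2 ^ g xs + set_encode (X xs))"
    using computable_finset_insert
    by (intro computable_if_mem computable_add computable_power2)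
  then show ?case
    by (rule computable_cong) (auto simp: insert_absorb computable_finset_finite[OF computable_finset_insert.hyps(2)])
qed

lemma computable_finset_comp:
  assumes "computable_finset (length gs) X" and "list_all (computable k) gs"
  shows "computable_finset k (\<lambda>xs. X (map (\<lambda>g. g xs) gs))"
  using assms(1)
  by (induction rule: computable_finset.induct)
    (auto intro: computable_finset.intros computable_comp[OF _ assms(2)])

fun tuple_decode :: "nat \<Rightarrow> nat \<Rightarrow> nat list" where
  "tuple_decode 0 m = []"
| "tuple_decode (Suc k) m = fst (prod_decode m) # tuple_decode k (snd (prod_decode m))"

lemma length_tuple_decode [simp]: "length (tuple_decode k m) = k"
  by (induction k arbitrary: m) auto

lemma tuple_decode_surj: "length xs = k \<Longrightarrow> \<exists>m. tuple_decode k m = xs"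
proof (induction xs arbitrary: k)
  case (Cons x xs)
  then obtain m where "tuple_decode (k - 1) m = xs" by fastforce
  then have "tuple_decode k (prod_encode (x, m)) = x # xs"
    using Cons.prems by (cases k) auto
  then show ?case by blast
qed simp

lemma computable_tuple_decode:
  "computable n g \<Longrightarrow> i < k \<Longrightarrow> computable n (\<lambda>xs. tuple_decode k (g xs) ! i)"
proof (induction k arbitrary: g i)
  case (Suc k)
  then show ?case
    by (cases i) (auto intro: computable_prod_decode Suc.IH[of "\<lambda>xs. snd (prod_decode (g xs))"])
qed simp

lemma ce_Union_computable_finset:
  assumes "computable_finset k X"
  shows "ce (\<Union>xs\<in>{xs. length xs = k}. X xs)"
proof -
  have zero_iff: "(if P then 0 else 1) = (0::nat) \<longleftrightarrow> P" for P
    by simp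
  let ?decode = "\<lambda>i xs. tuple_decode k (xs ! 0) ! i"
  have "list_all (computable 2) (map ?decode [0..<k])"
    by (auto simp: list_all_iff intro!: computable_tuple_decode computable_nth)
  then have "computable_finset 2 (\<lambda>xs. X (map (\<lambda>g. g xs) (map ?decode [0..<k])))"
    using computable_finset_comp[of "map ?decode [0..<k]" X] assms by simp
  moreover have "map (\<lambda>g. g xs) (map ?decode [0..<k]) = tuple_decode k (xs ! 0)" for xs
    by (simp add: list_eq_iff_nth_eq)
  ultimately have "computable_finset 2 (\<lambda>xs. X (tuple_decode k (xs ! 0)))"
    by simp
  then have "computable 2 (\<lambda>xs. if xs ! 1 \<in> X (tuple_decode k (xs ! 0)) then 0 else 1)"
    by (intro computable_if_mem computable_nth computable_const) simp_all
  from ce_exists_zero[OF this] have "ce {n. \<exists>m. n \<in> X (tuple_decode k m)}"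
    by (simp add: zero_iff)
  moreover have "{n. \<exists>m. n \<in> X (tuple_decode k m)} = (\<Union>xs\<in>{xs. length xs = k}. X xs)"
  proof (intro equalityI subsetI)
    fix n assume "n \<in> (\<Union>xs\<in>{xs. length xs = k}. X xs)"
    then obtain xs where "length xs = k" and "n \<in> X xs"
      by blast
    moreover obtain m where "tuple_decode k m = xs"
      using tuple_decode_surj[OF \<open>length xs = k\<close>] by blast
    ultimately show "n \<in> {n. \<exists>m. n \<in> X (tuple_decode k m)}"
      by (auto intro!: exI[of _ m])
  qed force
  ultimately show ?thesis by simp
qed

section \<open>Linear orders as structures\<close>

lemma iso_sym: "iso A B \<Longrightarrow> iso B A"
proof -
  assume "iso A B"
  then obtain f where f: "bij_betw f (fst A) (fst B)"
    and ord: "\<forall>x\<in>fst A. \<forall>y\<in>fst A. (x, y) \<in> snd A \<longleftrightarrow> (f x, f y) \<in> snd B"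
    unfolding iso_def by blast
  let ?g = "inv_into (fst A) f"
  have "\<forall>x\<in>fst B. \<forall>y\<in>fst B. (x, y) \<in> snd B \<longleftrightarrow> (?g x, ?g y) \<in> snd A"
    using ord f by (auto simp: bij_betw_def inv_into_into f_inv_into_f)
  then show "iso B A"
    unfolding iso_def using bij_betw_inv_into[OF f] by blast
qed

lemma iso_trans: "iso A B \<Longrightarrow> iso B C \<Longrightarrow> iso A C"
proof -
  assume "iso A B" "iso B C"
  then obtain f g where f: "bij_betw f (fst A) (fst B)"
    and ord_f: "\<forall>x\<in>fst A. \<forall>y\<in>fst A. (x, y) \<in> snd A \<longleftrightarrow> (f x, f y) \<in> snd B"
    and g: "bij_betw g (fst B) (fst C)"
    and ord_g: "\<forall>x\<in>fst B. \<forall>y\<in>fst B. (x, y) \<in> snd B \<longleftrightarrow> (g x, g y) \<in> snd C"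
    unfolding iso_def by blast
  have "\<forall>x\<in>fst A. \<forall>y\<in>fst A. (x, y) \<in> snd A \<longleftrightarrow> ((g \<circ> f) x, (g \<circ> f) y) \<in> snd C"
    using ord_f ord_g bij_betw_apply[OF f] by simp
  then show "iso A C"
    unfolding iso_def using bij_betw_trans[OF f g] by blast
qed

definition linear_struc :: "struc \<Rightarrow> bool" where
  "linear_struc L \<longleftrightarrow> is_structure L \<and> strict_linear_order_on (fst L) (snd L)"

lemma linear_strucD:
  assumes "linear_struc L"
  shows "snd L \<subseteq> fst L \<times> fst L" and "(a, a) \<notin> snd L" and "trans (snd L)"
    and "a \<in> fst L \<Longrightarrow> b \<in> fst L \<Longrightarrow> a \<noteq> b \<Longrightarrow> (a, b) \<in> snd L \<or> (b, a) \<in> snd L"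
  using assms
  unfolding linear_struc_def is_structure_def strict_linear_order_on_def irrefl_def total_on_def
  by auto

lemma linear_strucI:
  assumes "snd L \<subseteq> fst L \<times> fst L" and "\<And>a. (a, a) \<notin> snd L" and "trans (snd L)"
    and "\<And>a b. a \<in> fst L \<Longrightarrow> b \<in> fst L \<Longrightarrow> a \<noteq> b \<Longrightarrow> (a, b) \<in> snd L \<or> (b, a) \<in> snd L"
  shows "linear_struc L"
  using assms
  unfolding linear_struc_def is_structure_def strict_linear_order_on_def irrefl_def total_on_def
  by auto

lemma linear_struc_iso:
  assumes "iso A L" and "is_structure A" and "linear_struc L"
  shows "linear_struc A"
proof -
  from assms(1) obtain f where f: "bij_betw f (fst A) (fst L)"
    and ord: "\<forall>x\<in>fst A. \<forall>y\<in>fst A. (x, y) \<in> snd A \<longleftrightarrow> (f x, f y) \<in> snd L"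
    unfolding iso_def by blast
  have dom: "snd A \<subseteq> fst A \<times> fst A"
    using assms(2) unfolding is_structure_def .
  note L = linear_strucD[OF assms(3)]
  show ?thesis
  proof (rule linear_strucI[OF dom])
    show "(a, a) \<notin> snd A" for a
      using dom ord L(2) by blast
    show "trans (snd A)"
      using dom ord L(3) unfolding trans_def by blast
    show "(a, b) \<in> snd A \<or> (b, a) \<in> snd A" if "a \<in> fst A" "b \<in> fst A" "a \<noteq> b" for a b
      using that ord L(4) bij_betw_apply[OF f] bij_betw_imp_inj_on[OF f] by (metis inj_onD)
  qed
qed

lemma linear_struc_rev_order:
  assumes "linear_struc L"
  shows "linear_struc (rev_order L)"
  unfolding rev_order_def
  by (rule linear_strucI) (use linear_strucD[OF assms] in \<open>auto\<close>)

lemma parity_less_iff: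
  fixes a b :: nat
  shows "a mod 2 < b mod 2 \<longleftrightarrow> even a \<and> odd b"
    and "a mod 2 = b mod 2 \<longleftrightarrow> (even a \<longleftrightarrow> even b)"
    and "(even a \<longleftrightarrow> even b) \<Longrightarrow> a div 2 < b div 2 \<longleftrightarrow> a < b"
  by presburger+

lemma omega_times_2_less_iff:
  "(a, b) \<in> snd omega_times_2 \<longleftrightarrow> even a \<and> odd b \<or> (even a \<longleftrightarrow> even b) \<and> a < b"
  unfolding omega_times_2_def by (auto simp: parity_less_iff)

lemma omega_star_times_2_less_iff:
  "(a, b) \<in> snd omega_star_times_2 \<longleftrightarrow> even a \<and> odd b \<or> (even a \<longleftrightarrow> even b) \<and> b < a"
  unfolding omega_star_times_2_def by (auto simp: parity_less_iff)

lemma fst_omega_times_2 [simp]: "fst omega_times_2 = UNIV"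
  by (simp add: omega_times_2_def)

lemma fst_omega_star_times_2 [simp]: "fst omega_star_times_2 = UNIV"
  by (simp add: omega_star_times_2_def)

lemma linear_omega_times_2: "linear_struc omega_times_2"
  by (intro linear_strucI) (auto simp: omega_times_2_less_iff trans_def)

lemma linear_omega_star_times_2: "linear_struc omega_star_times_2"
  by (intro linear_strucI) (auto simp: omega_star_times_2_less_iff trans_def)

definition self_facts :: "nat \<Rightarrow> basic set" where
  "self_facts a = {Pos (Eq a a), Neg (Lt a a)}"

definition order_facts :: "nat \<Rightarrow> nat \<Rightarrow> basic set" where
  "order_facts a b = {Pos (Lt a b), Neg (Lt b a), Neg (Eq a b), Neg (Eq b a)}"

lemma diag_linear_struc:
  assumes "linear_struc L"
  shows "diag L = (\<Union>a\<in>fst L. self_facts a) \<union> (\<Union>(a, b)\<in>snd L. order_facts a b)"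
proof (intro equalityI subsetI)
  note L = linear_strucD[OF assms]
  fix \<phi> assume "\<phi> \<in> diag L"
  then have "holds L \<phi>" by (simp add: diag_def)
  then show "\<phi> \<in> (\<Union>a\<in>fst L. self_facts a) \<union> (\<Union>(a, b)\<in>snd L. order_facts a b)"
    using L(4) by (cases "(L, \<phi>)" rule: holds.cases) (force simp: self_facts_def order_facts_def)+
next
  note L = linear_strucD[OF assms]
  have asym: "(b, a) \<notin> snd L" if "(a, b) \<in> snd L" for a b
    using that L(2,3) by (meson transD)
  fix \<phi> assume "\<phi> \<in> (\<Union>a\<in>fst L. self_facts a) \<union> (\<Union>(a, b)\<in>snd L. order_facts a b)"
  then show "\<phi> \<in> diag L"
    using L(1,2) asym by (auto simp: diag_def self_facts_def order_facts_def)
qed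

lemma diag_inj:
  assumes "is_structure B" and "is_structure C" and "diag B = diag C"
  shows "B = C"
proof -
  have "fst B = fst C"
  proof -
    have "a \<in> fst D \<longleftrightarrow> Pos (Eq a a) \<in> diag D" for a D by (simp add: diag_def)
    then show ?thesis using assms(3) by blast
  qed
  moreover have "snd B = snd C"
  proof -
    have "p \<in> snd D \<longleftrightarrow> Pos (Lt (fst p) (snd p)) \<in> diag D" if "is_structure D" for p D
      using that by (auto simp: diag_def is_structure_def)
    then show ?thesis using assms by blast
  qed
  ultimately show "B = C" by (simp add: prod_eq_iff)
qed

lemma basic_code_inj: "inj basic_code"
proof (rule injI)
  have atom: "atom_code a = atom_code b \<Longrightarrow> a = b" for a b
    by (cases a; cases b) auto
  fix \<phi> \<psi> assume "basic_code \<phi> = basic_code \<psi>"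
  then show "\<phi> = \<psi>"
    by (cases \<phi>; cases \<psi>) (auto dest: atom, presburger+)
qed

lemma pair_code_eq_iff:
  "finite \<alpha> \<Longrightarrow> finite \<beta> \<Longrightarrow> pair_code \<alpha> \<phi> = pair_code \<beta> \<psi> \<longleftrightarrow> \<alpha> = \<beta> \<and> \<phi> = \<psi>"
  unfolding pair_code_def
  by (auto simp: set_encode_eq inj_image_eq_iff[OF basic_code_inj] inj_eq[OF basic_code_inj])

lemma enum_apply_pair_code_image:
  assumes "\<And>\<alpha> \<phi>. (\<alpha>, \<phi>) \<in> \<Gamma> \<Longrightarrow> finite \<alpha>"
  shows "enum_apply (case_prod pair_code ` \<Gamma>) X = {\<phi>. \<exists>\<alpha>\<subseteq>X. (\<alpha>, \<phi>) \<in> \<Gamma>}"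
  unfolding enum_apply_def using assms by (auto simp: pair_code_eq_iff)

section \<open>The embedding and its enumeration operator\<close>

text \<open>The labelling \<open>\<nu>\<close> of the elements enters only the side condition.  The operator uses
  \<open>\<nu> = id\<close>; transporting the embedding along an isomorphism replaces \<open>\<nu>\<close> by its
  composition with the isomorphism (lemma \<open>embed_transfer\<close>).\<close>
definition embed_dom :: "struc \<Rightarrow> (nat \<Rightarrow> nat) \<Rightarrow> nat set" where
  "embed_dom A \<nu> = {prod_encode (y, x) | y x. (y, x) \<in> snd A \<and> (\<exists>z. (x, z) \<in> snd A \<and> \<nu> y < \<nu> z)}"

definition embed_rel :: "struc \<Rightarrow> (nat \<Rightarrow> nat) \<Rightarrow> (nat \<times> nat) set" where
  "embed_rel A \<nu> = {(prod_encode (y, x), prod_encode (y', x')) | y x y' x'.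
     prod_encode (y, x) \<in> embed_dom A \<nu> \<and> prod_encode (y', x') \<in> embed_dom A \<nu> \<and>
     ((x, x') \<in> snd A \<or> x = x' \<and> (y, y') \<in> snd A)}"

definition embed_struc :: "struc \<Rightarrow> (nat \<Rightarrow> nat) \<Rightarrow> struc" where
  "embed_struc A \<nu> = (embed_dom A \<nu>, embed_rel A \<nu>)"

lemma prod_encode_in_embed_dom [simp]:
  "prod_encode (y, x) \<in> embed_dom A \<nu> \<longleftrightarrow> (y, x) \<in> snd A \<and> (\<exists>z. (x, z) \<in> snd A \<and> \<nu> y < \<nu> z)"
  unfolding embed_dom_def by simp

lemma prod_encode_in_embed_rel [simp]:
  "(prod_encode (y, x), prod_encode (y', x')) \<in> embed_rel A \<nu> \<longleftrightarrow>
     prod_encode (y, x) \<in> embed_dom A \<nu> \<and> prod_encode (y', x') \<in> embed_dom A \<nu> \<and>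
     ((x, x') \<in> snd A \<or> x = x' \<and> (y, y') \<in> snd A)"
  unfolding embed_rel_def by (simp del: prod_encode_in_embed_dom)

lemma embed_domE:
  assumes "e \<in> embed_dom A \<nu>"
  obtains y x z where "e = prod_encode (y, x)" and "(y, x) \<in> snd A" and "(x, z) \<in> snd A"
    and "\<nu> y < \<nu> z"
  using assms unfolding embed_dom_def by blast

lemma embed_relE:
  assumes "(e, e') \<in> embed_rel A \<nu>"
  obtains y x y' x' where "e = prod_encode (y, x)" and "e' = prod_encode (y', x')"
    and "prod_encode (y, x) \<in> embed_dom A \<nu>" and "prod_encode (y', x') \<in> embed_dom A \<nu>"
    and "(x, x') \<in> snd A \<or> x = x' \<and> (y, y') \<in> snd A"
  using assms unfolding embed_rel_def by blast

lemma embed_struc_structure: "is_structure (embed_struc A \<nu>)"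
  unfolding is_structure_def embed_struc_def embed_rel_def by auto

lemma linear_struc_embed_struc:
  assumes "linear_struc A"
  shows "linear_struc (embed_struc A \<nu>)"
proof -
  note A = linear_strucD[OF assms]
  have trans_A: "(a, c) \<in> snd A" if "(a, b) \<in> snd A" "(b, c) \<in> snd A" for a b c
    using A(3) that by (meson transD)
  show ?thesis
    unfolding embed_struc_def
  proof (rule linear_strucI, unfold fst_conv snd_conv)
    show "embed_rel A \<nu> \<subseteq> embed_dom A \<nu> \<times> embed_dom A \<nu>"
      unfolding embed_rel_def by auto
    show "(e, e) \<notin> embed_rel A \<nu>" for e
    proof
      assume "(e, e) \<in> embed_rel A \<nu>"
      then show False
        using A(2) by (elim embed_relE) simp
    qed
    show "trans (embed_rel A \<nu>)"
    proof (rule transI)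
      fix e1 e2 e3 assume "(e1, e2) \<in> embed_rel A \<nu>" "(e2, e3) \<in> embed_rel A \<nu>"
      then show "(e1, e3) \<in> embed_rel A \<nu>"
        by (elim embed_relE) (simp, metis trans_A)
    qed
    show "(e, e') \<in> embed_rel A \<nu> \<or> (e', e) \<in> embed_rel A \<nu>"
      if dom: "e \<in> embed_dom A \<nu>" "e' \<in> embed_dom A \<nu>" and ne: "e \<noteq> e'" for e e'
    proof -
      obtain y x y' x' where e: "e = prod_encode (y, x)" "e' = prod_encode (y', x')"
        and yx: "(y, x) \<in> snd A" "(y', x') \<in> snd A"
        using dom by (metis embed_domE)
      have "y \<in> fst A" "x \<in> fst A" "y' \<in> fst A" "x' \<in> fst A"
        using yx A(1) by auto
      moreover have "x \<noteq> x' \<or> y \<noteq> y'"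
        using ne e by auto
      ultimately show ?thesis
        using dom A(4)[of x x'] A(4)[of y y'] unfolding e prod_encode_in_embed_rel by blast
    qed
  qed
qed

text \<open>\<open>dom_witness y x t\<close> witnesses that the pair \<open>(y, x)\<close> is in the domain, with the successor
  \<open>y + t + 1\<close> of \<open>x\<close>.  The two other families witness that \<open>(y, x)\<close> precedes \<open>(y', x')\<close>,
  because \<open>x < x'\<close>, resp. because \<open>x = x'\<close> and \<open>y < y'\<close>.\<close>
definition dom_witness :: "nat \<Rightarrow> nat \<Rightarrow> nat \<Rightarrow> basic set" where
  "dom_witness y x t = {Pos (Lt y x), Pos (Lt x (y + t + 1))}"

definition gamma_at :: "nat \<Rightarrow> nat \<Rightarrow> nat \<Rightarrow> nat \<Rightarrow> nat \<Rightarrow> nat \<Rightarrow> (basic set \<times> basic) set" where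
  "gamma_at y x t y' x' t' =
     Pair (dom_witness y x t) ` self_facts (prod_encode (y, x)) \<union>
     Pair (insert (Pos (Lt x x')) (dom_witness y x t \<union> dom_witness y' x' t'))
       ` order_facts (prod_encode (y, x)) (prod_encode (y', x')) \<union>
     Pair (insert (Pos (Lt y y')) (dom_witness y x t \<union> dom_witness y' x t'))
       ` order_facts (prod_encode (y, x)) (prod_encode (y', x))"

definition gamma :: "(basic set \<times> basic) set" where
  "gamma = {r. \<exists>y x t y' x' t'. r \<in> gamma_at y x t y' x' t'}"

lemma in_gammaI: "r \<in> gamma_at y x t y' x' t' \<Longrightarrow> r \<in> gamma"
  unfolding gamma_def by blast

lemma finite_gamma: "(\<alpha>, \<phi>) \<in> gamma \<Longrightarrow> finite \<alpha>"
  unfolding gamma_def gamma_at_def dom_witness_def by auto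

lemma ce_gamma: "ce (case_prod pair_code ` gamma)"
proof -
  have "computable_finset 6 (\<lambda>ps. case_prod pair_code `
      gamma_at (ps ! 0) (ps ! 1) (ps ! 2) (ps ! 3) (ps ! 4) (ps ! 5))"
    unfolding gamma_at_def dom_witness_def self_facts_def order_facts_def pair_code_def
    by (simp add: image_Un insert_commute)
      (intro computable_finset.intros computable_set_encode computable_prod_encode computable_mult
        computable_add computable_power2 computable_Suc computable_const computable_nth; simp)
  from ce_Union_computable_finset[OF this]
  have "ce (\<Union>ps\<in>{ps. length ps = 6}. case_prod pair_code ` gamma_at (ps ! 0) (ps ! 1) (ps ! 2) (ps ! 3) (ps ! 4) (ps ! 5))" .
  moreover have "(\<Union>ps\<in>{ps. length ps = 6}. case_prod pair_code ` gamma_at (ps ! 0) (ps ! 1) (ps ! 2) (ps ! 3) (ps ! 4) (ps ! 5))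
      = case_prod pair_code ` gamma"
  proof (intro equalityI subsetI)
    fix n assume "n \<in> case_prod pair_code ` gamma"
    then obtain y x t y' x' t' r where "r \<in> gamma_at y x t y' x' t'" and "n = case_prod pair_code r"
      unfolding gamma_def by blast
    then show "n \<in> (\<Union>ps\<in>{ps. length ps = 6}.
        case_prod pair_code ` gamma_at (ps ! 0) (ps ! 1) (ps ! 2) (ps ! 3) (ps ! 4) (ps ! 5))"
      by (intro UN_I[of "[y, x, t, y', x', t']"]) auto
  qed (force simp: gamma_def)
  ultimately show ?thesis by simp
qed

lemma Pos_Lt_in_diag: "is_structure A \<Longrightarrow> Pos (Lt a b) \<in> diag A \<longleftrightarrow> (a, b) \<in> snd A"
  unfolding diag_def is_structure_def by auto

lemma dom_witness_subset_diag:
  "is_structure A \<Longrightarrow> dom_witness y x t \<subseteq> diag A \<longleftrightarrow> (y, x) \<in> snd A \<and> (x, y + t + 1) \<in> snd A"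
  unfolding dom_witness_def by (simp add: Pos_Lt_in_diag)

lemma in_embed_dom_iff_dom_witness:
  assumes "is_structure A"
  shows "prod_encode (y, x) \<in> embed_dom A id \<longleftrightarrow> (\<exists>t. dom_witness y x t \<subseteq> diag A)"
proof -
  have "(\<exists>z. (x, z) \<in> snd A \<and> y < z) \<longleftrightarrow> (\<exists>t. (x, y + t + 1) \<in> snd A)"
    by (metis less_add_Suc1 less_imp_Suc_add add_Suc_right add.commute Suc_eq_plus1)
  then show ?thesis
    by (simp add: dom_witness_subset_diag[OF assms])
qed

lemma gamma_sound:
  assumes A: "is_structure A" and "(\<alpha>, \<phi>) \<in> gamma" and sub: "\<alpha> \<subseteq> diag A"
  shows "\<phi> \<in> (\<Union>e\<in>embed_dom A id. self_facts e) \<union> (\<Union>(e, e')\<in>embed_rel A id. order_facts e e')"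
proof -
  note witness = in_embed_dom_iff_dom_witness[OF A]
  obtain y x t y' x' t' where "(\<alpha>, \<phi>) \<in> gamma_at y x t y' x' t'"
    using assms(2) unfolding gamma_def by blast
  then consider
      "\<alpha> = dom_witness y x t" "\<phi> \<in> self_facts (prod_encode (y, x))"
    | "\<alpha> = insert (Pos (Lt x x')) (dom_witness y x t \<union> dom_witness y' x' t')"
      "\<phi> \<in> order_facts (prod_encode (y, x)) (prod_encode (y', x'))"
    | "\<alpha> = insert (Pos (Lt y y')) (dom_witness y x t \<union> dom_witness y' x t')"
      "\<phi> \<in> order_facts (prod_encode (y, x)) (prod_encode (y', x))"
    unfolding gamma_at_def by blast
  then show ?thesis
  proof cases
    case 1
    then show ?thesis using sub witness by blast
  next
    case 2
    then have "(prod_encode (y, x), prod_encode (y', x')) \<in> embed_rel A id"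
      using sub witness Pos_Lt_in_diag[OF A] by (simp del: prod_encode_in_embed_dom) blast
    then show ?thesis using 2 by blast
  next
    case 3
    then have "(prod_encode (y, x), prod_encode (y', x)) \<in> embed_rel A id"
      using sub witness Pos_Lt_in_diag[OF A] by (simp del: prod_encode_in_embed_dom) blast
    then show ?thesis using 3 by blast
  qed
qed

lemma gamma_complete_self_facts:
  assumes A: "is_structure A" and "e \<in> embed_dom A id" and "\<phi> \<in> self_facts e"
  shows "\<exists>\<alpha>\<subseteq>diag A. (\<alpha>, \<phi>) \<in> gamma"
proof -
  obtain y x t where "e = prod_encode (y, x)" and sub: "dom_witness y x t \<subseteq> diag A"
    using assms(2) in_embed_dom_iff_dom_witness[OF A] by (metis embed_domE)
  then have "(dom_witness y x t, \<phi>) \<in> gamma"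
    using assms(3) by (intro in_gammaI[of _ y x t 0 0 0]) (auto simp: gamma_at_def)
  then show ?thesis
    using sub by blast
qed

lemma gamma_complete_order_facts:
  assumes A: "is_structure A" and "(e, e') \<in> embed_rel A id" and \<phi>: "\<phi> \<in> order_facts e e'"
  shows "\<exists>\<alpha>\<subseteq>diag A. (\<alpha>, \<phi>) \<in> gamma"
proof -
  obtain y x y' x' where e: "e = prod_encode (y, x)" "e' = prod_encode (y', x')"
    and dom: "prod_encode (y, x) \<in> embed_dom A id" "prod_encode (y', x') \<in> embed_dom A id"
    and less: "(x, x') \<in> snd A \<or> x = x' \<and> (y, y') \<in> snd A"
    using assms(2) by (elim embed_relE) blast
  obtain t t' where t: "dom_witness y x t \<subseteq> diag A" "dom_witness y' x' t' \<subseteq> diag A"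
    using dom in_embed_dom_iff_dom_witness[OF A] by blast
  from less show ?thesis
  proof
    assume "(x, x') \<in> snd A"
    then have "insert (Pos (Lt x x')) (dom_witness y x t \<union> dom_witness y' x' t') \<subseteq> diag A"
      using t Pos_Lt_in_diag[OF A] by blast
    moreover have "(insert (Pos (Lt x x')) (dom_witness y x t \<union> dom_witness y' x' t'), \<phi>) \<in> gamma"
      using \<phi> e by (intro in_gammaI[of _ y x t y' x' t']) (auto simp: gamma_at_def)
    ultimately show ?thesis by blast
  next
    assume "x = x' \<and> (y, y') \<in> snd A"
    then have "insert (Pos (Lt y y')) (dom_witness y x t \<union> dom_witness y' x t') \<subseteq> diag A"
      using t Pos_Lt_in_diag[OF A] by blast
    moreover have "(insert (Pos (Lt y y')) (dom_witness y x t \<union> dom_witness y' x t'), \<phi>) \<in> gamma"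
      using \<phi> e \<open>x = x' \<and> (y, y') \<in> snd A\<close>
      by (intro in_gammaI[of _ y x t y' x' t']) (auto simp: gamma_at_def)
    ultimately show ?thesis by blast
  qed
qed

lemma enum_apply_gamma:
  assumes "is_structure A" and "linear_struc (embed_struc A id)"
  shows "enum_apply (case_prod pair_code ` gamma) (diag A) = diag (embed_struc A id)"
proof -
  have "{\<phi>. \<exists>\<alpha>\<subseteq>diag A. (\<alpha>, \<phi>) \<in> gamma} =
      (\<Union>e\<in>embed_dom A id. self_facts e) \<union> (\<Union>(e, e')\<in>embed_rel A id. order_facts e e')"
  proof (intro equalityI subsetI)
    fix \<phi> assume "\<phi> \<in> {\<phi>. \<exists>\<alpha>\<subseteq>diag A. (\<alpha>, \<phi>) \<in> gamma}"
    then obtain \<alpha> where "\<alpha> \<subseteq> diag A" and "(\<alpha>, \<phi>) \<in> gamma"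
      by blast
    then show "\<phi> \<in> (\<Union>e\<in>embed_dom A id. self_facts e) \<union> (\<Union>(e, e')\<in>embed_rel A id. order_facts e e')"
      using gamma_sound[OF assms(1)] by blast
  next
    fix \<phi> assume "\<phi> \<in> (\<Union>e\<in>embed_dom A id. self_facts e) \<union> (\<Union>(e, e')\<in>embed_rel A id. order_facts e e')"
    then show "\<phi> \<in> {\<phi>. \<exists>\<alpha>\<subseteq>diag A. (\<alpha>, \<phi>) \<in> gamma}"
      using gamma_complete_self_facts[OF assms(1)] gamma_complete_order_facts[OF assms(1)] by blast
  qed
  then show ?thesis
    using enum_apply_pair_code_image[of gamma, OF finite_gamma] diag_linear_struc[OF assms(2)]
    by (simp add: embed_struc_def)
qed

section \<open>Order types of the embedding\<close>

lemma rank_order_iso: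
  fixes S :: "'a set" and R :: "('a \<times> 'a) set"
  defines "rank a \<equiv> card {b\<in>S. (b, a) \<in> R}"
  assumes "infinite S" and "strict_linear_order_on S R"
    and finite_pred: "\<And>a. a \<in> S \<Longrightarrow> finite {b\<in>S. (b, a) \<in> R}"
  shows "bij_betw rank S UNIV" and "\<And>a b. a \<in> S \<Longrightarrow> b \<in> S \<Longrightarrow> (a, b) \<in> R \<longleftrightarrow> rank a < rank b"
proof -
  have trans: "trans R" and irrefl: "\<And>a. (a, a) \<notin> R"
    and total: "\<And>a b. a \<in> S \<Longrightarrow> b \<in> S \<Longrightarrow> a \<noteq> b \<Longrightarrow> (a, b) \<in> R \<or> (b, a) \<in> R"
    using assms(3) unfolding strict_linear_order_on_def irrefl_def total_on_def by auto
  have less: "rank a < rank b" if "a \<in> S" "b \<in> S" "(a, b) \<in> R" for a b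
  proof -
    have "{c\<in>S. (c, a) \<in> R} \<subset> {c\<in>S. (c, b) \<in> R}"
      using that trans irrefl by (blast dest: transD)
    then show ?thesis
      unfolding rank_def using finite_pred[OF that(2)] by (rule psubset_card_mono[rotated])
  qed
  show iff: "(a, b) \<in> R \<longleftrightarrow> rank a < rank b" if "a \<in> S" "b \<in> S" for a b
    using less[of a b] less[of b a] total[of a b] that by (cases "a = b") auto
  have inj: "inj_on rank S"
    by (rule inj_onI) (metis less less_irrefl total)
  have down: "m \<in> rank ` S" if "a \<in> S" "m < rank a" for a m
  proof -
    let ?P = "{b\<in>S. (b, a) \<in> R}"
    have "inj_on rank ?P"
      using inj by (rule inj_on_subset) blast
    have "card (rank ` ?P) = rank a"
      unfolding card_image[OF \<open>inj_on rank ?P\<close>] rank_def by simp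
    moreover have "rank ` ?P \<subseteq> {..<rank a}"
      using less that(1) by auto
    ultimately have "rank ` ?P = {..<rank a}"
      by (intro card_subset_eq) auto
    then show ?thesis using that(2) by blast
  qed
  have "n \<in> rank ` S" for n
  proof -
    have "infinite (rank ` S)"
      using inj assms(2) finite_imageD by blast
    then obtain a where "a \<in> S" "n \<le> rank a"
      unfolding infinite_nat_iff_unbounded_le by blast
    then show ?thesis using down by (cases "n = rank a") auto
  qed
  then show "bij_betw rank S UNIV"
    using inj unfolding bij_betw_def by auto
qed

lemma iso_omega_squared_if_blocks:
  fixes D :: "nat set" and R :: "(nat \<times> nat) set" and h :: "nat \<Rightarrow> nat"
  assumes "linear_struc (D, R)"
    and mono: "\<And>a b. (a, b) \<in> R \<Longrightarrow> h a \<le> h b"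
    and block_infinite: "\<And>n. infinite {a\<in>D. h a = n}"
    and block_finite_pred: "\<And>a. a \<in> D \<Longrightarrow> finite {b\<in>D. h b = h a \<and> (b, a) \<in> R}"
  shows "iso (D, R) omega_squared"
proof -
  note lin = linear_strucD[OF assms(1), simplified]
  define block where "block n = {a\<in>D. h a = n}" for n
  define rank where "rank n a = card {b\<in>block n. (b, a) \<in> R}" for n a
  have block_order: "strict_linear_order_on (block n) R" for n
    using lin unfolding strict_linear_order_on_def irrefl_def total_on_def block_def by auto
  have block_pred: "finite {b\<in>block n. (b, a) \<in> R}" if "a \<in> block n" for a n
    using block_finite_pred[of a] that unfolding block_def by (auto elim: rev_finite_subset)
  have rank_bij: "bij_betw (rank n) (block n) UNIV"
    and rank_less: "\<And>a b. a \<in> block n \<Longrightarrow> b \<in> block n \<Longrightarrow> (a, b) \<in> R \<longleftrightarrow> rank n a < rank n b" for n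
    using rank_order_iso[OF _ block_order block_pred] block_infinite[of n]
    unfolding rank_def block_def by blast+
  define g where "g a = prod_encode (h a, rank (h a) a)" for a
  have in_block: "a \<in> block (h a)" if "a \<in> D" for a
    using that unfolding block_def by simp
  have "inj_on g D"
  proof (rule inj_onI)
    fix a b assume "a \<in> D" "b \<in> D" "g a = g b"
    then show "a = b"
      using in_block bij_betw_imp_inj_on[OF rank_bij] unfolding g_def by (metis inj_onD prod_encode_eq prod.inject)
  qed
  moreover have "g ` D = UNIV"
  proof (intro set_eqI iffI)
    fix k :: nat
    obtain n j where k: "prod_decode k = (n, j)" by (cases "prod_decode k")
    obtain a where "a \<in> block n" "rank n a = j"
      using rank_bij[of n] unfolding bij_betw_def by (metis UNIV_I imageE)
    then show "k \<in> g ` D"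
      unfolding g_def block_def using k by (auto intro!: image_eqI[of _ _ a]) (metis prod_decode_inverse)
  qed simp
  moreover have "(a, b) \<in> R \<longleftrightarrow> h a < h b \<or> h a = h b \<and> rank (h a) a < rank (h a) b"
    if "a \<in> D" "b \<in> D" for a b
    using mono[of a b] mono[of b a] rank_less[of a "h a" b] rank_less[of b "h a" a] in_block that lin(4)[of a b]
    by (cases "a = b") (auto simp: lin(2))
  ultimately show ?thesis
    unfolding iso_def omega_squared_def g_def bij_betw_def by auto
qed

lemma iso_rev_order: "iso (D, R\<inverse>) L \<Longrightarrow> iso (D, R) (rev_order L)"
  unfolding iso_def rev_order_def by auto

context
  fixes L A :: struc and g :: "nat \<Rightarrow> nat"
  assumes g: "bij_betw g (fst L) (fst A)"
    and ord: "\<And>a b. a \<in> fst L \<Longrightarrow> b \<in> fst L \<Longrightarrow> (a, b) \<in> snd L \<longleftrightarrow> (g a, g b) \<in> snd A"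
    and L: "is_structure L" and A: "is_structure A"
begin

lemma in_fst_if_less: "(y, x) \<in> snd L \<Longrightarrow> y \<in> fst L \<and> x \<in> fst L"
  using L unfolding is_structure_def by auto

lemma embed_dom_transfer:
  assumes "y \<in> fst L" and "x \<in> fst L"
  shows "prod_encode (g y, g x) \<in> embed_dom A \<nu> \<longleftrightarrow> prod_encode (y, x) \<in> embed_dom L (\<nu> \<circ> g)"
proof -
  have "(\<exists>z. (g x, z) \<in> snd A \<and> \<nu> (g y) < \<nu> z) \<longleftrightarrow> (\<exists>z. (x, z) \<in> snd L \<and> \<nu> (g y) < \<nu> (g z))"
  proof
    assume "\<exists>z. (g x, z) \<in> snd A \<and> \<nu> (g y) < \<nu> z"
    then obtain z where z: "(g x, z) \<in> snd A" "\<nu> (g y) < \<nu> z" by blast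
    moreover obtain z' where "z' \<in> fst L" "z = g z'"
      using z(1) A g unfolding is_structure_def bij_betw_def by blast
    ultimately show "\<exists>z. (x, z) \<in> snd L \<and> \<nu> (g y) < \<nu> (g z)"
      using ord[of x z'] assms(2) by auto
  next
    assume "\<exists>z. (x, z) \<in> snd L \<and> \<nu> (g y) < \<nu> (g z)"
    then show "\<exists>z. (g x, z) \<in> snd A \<and> \<nu> (g y) < \<nu> z"
      using ord in_fst_if_less assms(2) by blast
  qed
  then show ?thesis
    using assms by (simp add: ord)
qed

lemma embed_transfer: "iso (embed_struc L (\<nu> \<circ> g)) (embed_struc A \<nu>)"
proof -
  define G where "G e = prod_encode (g (fst (prod_decode e)), g (snd (prod_decode e)))" for e
  have G: "G (prod_encode (y, x)) = prod_encode (g y, g x)" for y x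
    unfolding G_def by simp
  have inj: "inj_on g (fst L)" and onto: "g ` fst L = fst A"
    using g unfolding bij_betw_def by auto
  have "inj_on G (embed_dom L (\<nu> \<circ> g))"
  proof (rule inj_onI)
    fix e e' assume "e \<in> embed_dom L (\<nu> \<circ> g)" "e' \<in> embed_dom L (\<nu> \<circ> g)" "G e = G e'"
    then show "e = e'"
      by (elim embed_domE) (simp add: G, metis in_fst_if_less inj inj_onD)
  qed
  moreover have "G ` embed_dom L (\<nu> \<circ> g) = embed_dom A \<nu>"
  proof (intro equalityI subsetI)
    fix e assume "e \<in> G ` embed_dom L (\<nu> \<circ> g)"
    then obtain y x where yx: "prod_encode (y, x) \<in> embed_dom L (\<nu> \<circ> g)" "e = G (prod_encode (y, x))"
      by (metis embed_domE imageE)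
    moreover have "y \<in> fst L" "x \<in> fst L"
      using yx(1) in_fst_if_less by auto
    ultimately show "e \<in> embed_dom A \<nu>"
      using embed_dom_transfer by (simp add: G del: prod_encode_in_embed_dom)
  next
    fix e assume "e \<in> embed_dom A \<nu>"
    then obtain y' x' where e: "e = prod_encode (y', x')" "prod_encode (y', x') \<in> embed_dom A \<nu>"
      by (metis embed_domE)
    then have "y' \<in> fst A" "x' \<in> fst A"
      using A unfolding is_structure_def by auto
    then obtain y x where "y \<in> fst L" "x \<in> fst L" "y' = g y" "x' = g x"
      using onto by blast
    then show "e \<in> G ` embed_dom L (\<nu> \<circ> g)"
      using e embed_dom_transfer by (auto simp: G intro!: image_eqI[of _ _ "prod_encode (y, x)"])
  qed
  moreover have "(e, e') \<in> embed_rel L (\<nu> \<circ> g) \<longleftrightarrow> (G e, G e') \<in> embed_rel A \<nu>"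
    if dom: "e \<in> embed_dom L (\<nu> \<circ> g)" "e' \<in> embed_dom L (\<nu> \<circ> g)" for e e'
  proof -
    obtain y x y' x' where e: "e = prod_encode (y, x)" "e' = prod_encode (y', x')"
      and "(y, x) \<in> snd L" "(y', x') \<in> snd L"
      using dom by (metis embed_domE)
    then have fst: "y \<in> fst L" "x \<in> fst L" "y' \<in> fst L" "x' \<in> fst L"
      using in_fst_if_less by auto
    then have "((x, x') \<in> snd L \<or> x = x' \<and> (y, y') \<in> snd L) \<longleftrightarrow>
        ((g x, g x') \<in> snd A \<or> g x = g x' \<and> (g y, g y') \<in> snd A)"
      using ord inj by (auto dest: inj_onD)
    then show ?thesis
      using dom embed_dom_transfer[OF fst(1,2)] embed_dom_transfer[OF fst(3,4)] unfolding e
      by (simp add: G del: prod_encode_in_embed_dom)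
  qed
  ultimately show ?thesis
    unfolding iso_def embed_struc_def bij_betw_def by auto
qed

end

lemma inj_on_unbounded:
  assumes "inj_on \<nu> T" and "infinite T"
  shows "\<exists>z\<in>T. n < (\<nu> z :: nat)"
proof -
  have "infinite (\<nu> ` T)"
    using assms finite_imageD by blast
  then obtain m where "m \<in> \<nu> ` T" "n < m"
    unfolding infinite_nat_iff_unbounded by blast
  then show ?thesis by blast
qed

lemma inj_on_card_large:
  assumes "inj_on \<nu> T" and "finite T" and "n < card T"
  shows "\<exists>z\<in>T. n \<le> (\<nu> z :: nat)"
proof (rule ccontr)
  assume "\<not> (\<exists>z\<in>T. n \<le> \<nu> z)"
  then have "\<nu> ` T \<subseteq> {..<n}" by auto
  then have "card (\<nu> ` T) \<le> n" using card_mono[of "{..<n}"] by fastforce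
  then show False using assms card_image by fastforce
qed

lemma infinite_if_inj_range: "inj (f :: nat \<Rightarrow> 'a) \<Longrightarrow> range f \<subseteq> T \<Longrightarrow> infinite T"
  using infinite_super[OF _ range_inj_infinite] by blast

text \<open>Block 0 collects the pairs whose \<open>x\<close> lies in the first copy of \<open>\<omega>\<close>.  For \<open>x = 2k + 1\<close> in
  the second copy, the pairs with \<open>y\<close> in the first copy form block \<open>k + 1\<close>, and the finitely
  many pairs with \<open>y\<close> in the second copy are moved to block \<open>k + 2\<close>, so that every block has
  type \<open>\<omega>\<close>.\<close>
definition omega_times_2_block :: "nat \<Rightarrow> nat \<Rightarrow> nat" where
  "omega_times_2_block y x = (if even x then 0 else if even y then x div 2 + 1 else x div 2 + 2)"

lemma omega_times_2_block_mono:
  assumes "(x, x') \<in> snd omega_times_2 \<or> x = x' \<and> (y, y') \<in> snd omega_times_2"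
  shows "omega_times_2_block y x \<le> omega_times_2_block y' x'"
  using assms unfolding omega_times_2_less_iff omega_times_2_block_def
  by (elim disjE; simp split: if_splits; presburger)

lemma omega_times_2_block_bound:
  assumes "(y', x') \<in> snd omega_times_2"
    and "(x', x) \<in> snd omega_times_2 \<or> x' = x \<and> (y', y) \<in> snd omega_times_2"
    and "omega_times_2_block y' x' = omega_times_2_block y x"
  shows "y' \<le> x + y \<and> x' \<le> x + y"
  using assms unfolding omega_times_2_less_iff omega_times_2_block_def
  by (elim disjE; simp split: if_splits; presburger)

lemma embed_omega_times_2:
  assumes "inj \<nu>"
  shows "iso (embed_struc omega_times_2 \<nu>) omega_squared"
proof -
  let ?D = "embed_dom omega_times_2 \<nu>" and ?R = "embed_rel omega_times_2 \<nu>"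
  have "\<exists>z. (x, z) \<in> snd omega_times_2 \<and> \<nu> y < \<nu> z" for x y
  proof -
    have "infinite {z. odd z \<and> x < z}"
      by (rule infinite_if_inj_range[of "\<lambda>i. 2 * (x + i) + 1"]) (auto simp: inj_def)
    then obtain z where "odd z" "x < z" "\<nu> y < \<nu> z"
      using inj_on_unbounded[OF inj_on_subset[OF assms subset_UNIV]] by blast
    then show ?thesis
      by (cases "even x") (auto simp: omega_times_2_less_iff)
  qed
  then have dom: "prod_encode (y, x) \<in> ?D \<longleftrightarrow> (y, x) \<in> snd omega_times_2" for y x
    by simp
  define h where "h e = case_prod omega_times_2_block (prod_decode e)" for e
  have h: "h (prod_encode (y, x)) = omega_times_2_block y x" for y x
    unfolding h_def by simp
  show ?thesis
    unfolding embed_struc_def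
  proof (rule iso_omega_squared_if_blocks[where h = h])
    show "linear_struc (?D, ?R)"
      using linear_struc_embed_struc[OF linear_omega_times_2] by (simp add: embed_struc_def)
  next
    fix a b assume "(a, b) \<in> ?R"
    then show "h a \<le> h b"
      by (elim embed_relE) (simp add: h omega_times_2_block_mono)
  next
    fix n
    show "infinite {a \<in> ?D. h a = n}"
    proof (cases n)
      case 0
      show ?thesis
        by (rule infinite_if_inj_range[of "\<lambda>j. prod_encode (0, 2 * j + 2)"])
          (use 0 in \<open>auto simp: inj_def h dom omega_times_2_block_def omega_times_2_less_iff
            simp del: prod_encode_in_embed_dom\<close>)
    next
      case (Suc k)
      show ?thesis
        by (rule infinite_if_inj_range[of "\<lambda>j. prod_encode (2 * j, 2 * k + 1)"])
          (use Suc in \<open>auto simp: inj_def h dom omega_times_2_block_def omega_times_2_less_iff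
            simp del: prod_encode_in_embed_dom\<close>)
    qed
  next
    fix e assume "e \<in> ?D"
    then obtain y x where e: "e = prod_encode (y, x)"
      by (metis embed_domE)
    have "{b \<in> ?D. h b = h e \<and> (b, e) \<in> ?R} \<subseteq> prod_encode ` ({..x + y} \<times> {..x + y})"
    proof
      fix b assume b: "b \<in> {b \<in> ?D. h b = h e \<and> (b, e) \<in> ?R}"
      then obtain y' x' where b_eq: "b = prod_encode (y', x')"
        by (auto elim: embed_domE)
      have "y' \<le> x + y \<and> x' \<le> x + y"
        using b unfolding b_eq e by (intro omega_times_2_block_bound) (auto simp: h)
      then show "b \<in> prod_encode ` ({..x + y} \<times> {..x + y})"
        unfolding b_eq by auto
    qed
    then show "finite {b \<in> ?D. h b = h e \<and> (b, e) \<in> ?R}"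
      by (rule finite_subset) simp
  qed
qed

text \<open>For the reversed order, block 0 collects the pairs whose \<open>x\<close> lies in the second copy (finitely
  many for each \<open>x\<close>, by the side condition) and block \<open>k + 1\<close> those with \<open>x = 2k\<close>.\<close>
definition omega_star_times_2_block :: "nat \<Rightarrow> nat" where
  "omega_star_times_2_block x = (if odd x then 0 else x div 2 + 1)"

lemma omega_star_times_2_block_mono:
  assumes "(x', x) \<in> snd omega_star_times_2 \<or> x' = x"
  shows "omega_star_times_2_block x \<le> omega_star_times_2_block x'"
  using assms unfolding omega_star_times_2_less_iff omega_star_times_2_block_def
  by (elim disjE; simp split: if_splits; presburger)

lemma omega_star_times_2_block_bound:
  assumes "(y, x) \<in> snd omega_star_times_2" and "(y', x') \<in> snd omega_star_times_2"
    and "(x, x') \<in> snd omega_star_times_2 \<or> x = x' \<and> (y, y') \<in> snd omega_star_times_2"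
    and "(x', z) \<in> snd omega_star_times_2"
    and "omega_star_times_2_block x' = omega_star_times_2_block x"
  shows "x' \<le> x \<and> (odd x \<longrightarrow> z < x) \<and> (even x \<longrightarrow> y' \<le> y)"
  using assms unfolding omega_star_times_2_less_iff omega_star_times_2_block_def
  by (elim disjE; simp split: if_splits; presburger)

lemma embed_omega_star_times_2:
  assumes "inj \<nu>"
  shows "iso (embed_struc omega_star_times_2 \<nu>) (rev_order omega_squared)"
proof -
  let ?D = "embed_dom omega_star_times_2 \<nu>" and ?R = "embed_rel omega_star_times_2 \<nu>"
  define h where "h e = omega_star_times_2_block (snd (prod_decode e))" for e
  have h: "h (prod_encode (y, x)) = omega_star_times_2_block x" for y x
    unfolding h_def by simp
  have "iso (?D, ?R\<inverse>) omega_squared"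
  proof (rule iso_omega_squared_if_blocks[where h = h])
    show "linear_struc (?D, ?R\<inverse>)"
      using linear_struc_rev_order[OF linear_struc_embed_struc[OF linear_omega_star_times_2]]
      by (simp add: embed_struc_def rev_order_def)
  next
    fix a b assume "(a, b) \<in> ?R\<inverse>"
    then show "h a \<le> h b"
      by (elim converseE embed_relE) (auto simp: h intro: omega_star_times_2_block_mono)
  next
    fix n
    show "infinite {a \<in> ?D. h a = n}"
    proof (cases n)
      case 0
      have "prod_encode (0, 2 * (j + \<nu> 0 + 2) + 1) \<in> ?D" for j
      proof -
        let ?T = "(\<lambda>i. 2 * i + 1) ` {..<\<nu> 0 + 2}"
        have "card ?T = \<nu> 0 + 2"
          by (simp add: card_image inj_on_def)
        then obtain z where "z \<in> ?T" "Suc (\<nu> 0) \<le> \<nu> z"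
          using inj_on_card_large[OF inj_on_subset[OF assms subset_UNIV], of ?T "Suc (\<nu> 0)"] by auto
        then show ?thesis
          by (auto simp: omega_star_times_2_less_iff intro!: exI[of _ z])
      qed
      then show ?thesis
        by (intro infinite_if_inj_range[of "\<lambda>j. prod_encode (0, 2 * (j + \<nu> 0 + 2) + 1)"])
          (use 0 in \<open>auto simp: inj_def h omega_star_times_2_block_def simp del: prod_encode_in_embed_dom\<close>)
    next
      case (Suc k)
      have "prod_encode (2 * (k + 1 + j), 2 * k) \<in> ?D" for j
      proof -
        have "infinite {z :: nat. odd z}"
          by (intro infinite_if_inj_range[of "\<lambda>i. 2 * i + 1"]) (auto simp: inj_def)
        then obtain z where "odd z" "\<nu> (2 * (k + 1 + j)) < \<nu> z"
          using inj_on_unbounded[OF inj_on_subset[OF assms subset_UNIV]] by blast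
        then show ?thesis
          by (auto simp: omega_star_times_2_less_iff intro!: exI[of _ z])
      qed
      then show ?thesis
        by (intro infinite_if_inj_range[of "\<lambda>j. prod_encode (2 * (k + 1 + j), 2 * k)"])
          (use Suc in \<open>auto simp: inj_def h omega_star_times_2_block_def simp del: prod_encode_in_embed_dom\<close>)
    qed
  next
    fix e assume "e \<in> ?D"
    then obtain y x where e: "e = prod_encode (y, x)"
      by (metis embed_domE)
    have sub: "{b \<in> ?D. h b = h e \<and> (b, e) \<in> ?R\<inverse>} \<subseteq>
        prod_encode ` (({y'. \<exists>z<x. \<nu> y' < \<nu> z} \<union> {..y}) \<times> {..x})"
    proof
      fix b assume b: "b \<in> {b \<in> ?D. h b = h e \<and> (b, e) \<in> ?R\<inverse>}"
      then obtain y' x' where b_eq: "b = prod_encode (y', x')"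
        by (auto elim: embed_domE)
      obtain z where z: "(x', z) \<in> snd omega_star_times_2" "\<nu> y' < \<nu> z"
        using b unfolding b_eq by auto
      have "x' \<le> x \<and> (odd x \<longrightarrow> z < x) \<and> (even x \<longrightarrow> y' \<le> y)"
        using b z(1) unfolding b_eq e by (intro omega_star_times_2_block_bound) (auto simp: h)
      then show "b \<in> prod_encode ` (({y'. \<exists>z<x. \<nu> y' < \<nu> z} \<union> {..y}) \<times> {..x})"
        unfolding b_eq using z(2) by (cases "odd x") auto
    qed
    have "{y'. \<exists>z<x. \<nu> y' < \<nu> z} = (\<Union>z<x. \<nu> -` {..<\<nu> z})"
      by auto
    then have "finite {y'. \<exists>z<x. \<nu> y' < \<nu> z}"
      using finite_vimageI[OF _ assms] by simp
    then show "finite {b \<in> ?D. h b = h e \<and> (b, e) \<in> ?R\<inverse>}"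
      using finite_subset[OF sub] by simp
  qed
  then show ?thesis
    unfolding embed_struc_def by (rule iso_rev_order)
qed

definition has_least :: "struc \<Rightarrow> bool" where
  "has_least L \<longleftrightarrow> (\<exists>a\<in>fst L. \<forall>b\<in>fst L. b \<noteq> a \<longrightarrow> (a, b) \<in> snd L)"

lemma iso_has_least: "iso A B \<Longrightarrow> has_least A \<Longrightarrow> has_least B"
proof -
  assume "iso A B" "has_least A"
  then obtain f where f: "bij_betw f (fst A) (fst B)"
    and ord: "\<forall>x\<in>fst A. \<forall>y\<in>fst A. (x, y) \<in> snd A \<longleftrightarrow> (f x, f y) \<in> snd B"
    unfolding iso_def by blast
  obtain a where a: "a \<in> fst A" "\<forall>b\<in>fst A. b \<noteq> a \<longrightarrow> (a, b) \<in> snd A"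
    using \<open>has_least A\<close> unfolding has_least_def by blast
  have "(f a, b') \<in> snd B" if b': "b' \<in> fst B" "b' \<noteq> f a" for b'
  proof -
    obtain b where "b \<in> fst A" "b' = f b"
      using b'(1) f unfolding bij_betw_def by blast
    then show ?thesis using a ord b'(2) by auto
  qed
  moreover have "f a \<in> fst B"
    using f a(1) by (rule bij_betw_apply)
  ultimately show "has_least B"
    unfolding has_least_def by blast
qed

lemma not_iso_omega_times_2_omega_star_times_2: "\<not> iso omega_times_2 omega_star_times_2"
proof
  assume "iso omega_times_2 omega_star_times_2"
  moreover have "has_least omega_times_2"
    unfolding has_least_def by (auto simp: omega_times_2_less_iff intro!: exI[of _ 0])
  moreover have "\<not> has_least omega_star_times_2"
  proof
    assume "has_least omega_star_times_2"
    then obtain a where "\<forall>b. b \<noteq> a \<longrightarrow> (a, b) \<in> snd omega_star_times_2"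
      unfolding has_least_def by auto
    then have "(a, a + 2) \<in> snd omega_star_times_2" by simp
    then show False by (simp add: omega_star_times_2_less_iff)
  qed
  ultimately show False
    using iso_has_least by blast
qed

lemma not_iso_omega_squared_rev_order: "\<not> iso omega_squared (rev_order omega_squared)"
proof
  assume "iso omega_squared (rev_order omega_squared)"
  moreover have "has_least omega_squared"
  proof -
    have zero: "prod_encode (0, 0) = 0"
      by (simp add: prod_encode_def)
    then have "prod_decode b \<noteq> (0, 0)" if "b \<noteq> 0" for b
      using that by (metis prod_decode_inverse)
    moreover have "prod_decode 0 = (0, 0)"
      using prod_encode_inverse[of "(0, 0)"] zero by simp
    ultimately show ?thesis
      unfolding has_least_def omega_squared_def
      by (auto intro!: exI[of _ 0]) (metis neq0_conv prod.collapse)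
  qed
  moreover have "\<not> has_least (rev_order omega_squared)"
  proof
    assume "has_least (rev_order omega_squared)"
    then obtain a where "\<forall>b. b \<noteq> a \<longrightarrow> (b, a) \<in> snd omega_squared"
      unfolding has_least_def rev_order_def by (auto simp: omega_squared_def)
    then have "(prod_encode (Suc (fst (prod_decode a)), 0), a) \<in> snd omega_squared"
      by (metis fst_conv lessI less_irrefl prod_encode_inverse)
    then show False
      unfolding omega_squared_def by simp
  qed
  ultimately show False
    using iso_has_least by blast
qed

lemma iso_iff_if_class2_preserved:
  assumes "\<not> iso L0 L1" and "\<not> iso M0 M1"
    and preserved: "\<And>A. A \<in> class2 L0 L1 \<Longrightarrow> (iso A L0 \<longrightarrow> iso (\<Phi> A) M0) \<and> (iso A L1 \<longrightarrow> iso (\<Phi> A) M1)"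
    and "A \<in> class2 L0 L1" and "A' \<in> class2 L0 L1"
  shows "iso A A' \<longleftrightarrow> iso (\<Phi> A) (\<Phi> A')"
proof -
  have cases: "iso B L0 \<and> iso (\<Phi> B) M0 \<or> iso B L1 \<and> iso (\<Phi> B) M1" if "B \<in> class2 L0 L1" for B
    using that preserved[OF that] unfolding class2_def by blast
  have same: "iso X Y" if "iso X K" "iso Y K" for X Y K
    using iso_trans[OF that(1) iso_sym[OF that(2)]] .
  have different: "\<not> iso X Y" if "iso X K" "iso Y K'" "\<not> iso K K'" for X Y K K'
    using iso_trans[OF iso_trans[OF iso_sym[OF that(1)]] that(2)] that(3) by blast
  show ?thesis
    using cases[OF assms(4)] cases[OF assms(5)]
  proof (elim disjE conjE)
    assume "iso A L0" "iso (\<Phi> A) M0" "iso A' L1" "iso (\<Phi> A') M1"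
    then show ?thesis using different assms(1,2) by blast
  next
    assume "iso A L1" "iso (\<Phi> A) M1" "iso A' L0" "iso (\<Phi> A') M0"
    then show ?thesis using different assms(1,2) iso_sym by blast
  qed (blast intro: same)+
qed

lemma iso_embed_struc_if_iso:
  assumes "iso A L" and "is_structure A" and "is_structure L" and "fst L = UNIV"
  obtains \<mu> where "inj \<mu>" and "iso (embed_struc A id) (embed_struc L \<mu>)"
proof -
  obtain g where g: "bij_betw g (fst L) (fst A)"
    and ord: "\<forall>a\<in>fst L. \<forall>b\<in>fst L. (a, b) \<in> snd L \<longleftrightarrow> (g a, g b) \<in> snd A"
    using iso_sym[OF assms(1)] unfolding iso_def by blast
  have "iso (embed_struc L (id \<circ> g)) (embed_struc A id)"
    using g ord assms(2,3) by (intro embed_transfer) auto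
  moreover have "inj g"
    using g assms(4) by (simp add: bij_betw_def)
  ultimately show thesis
    using that[of g] iso_sym by simp
qed

lemma iso_embed_struc_class2:
  assumes "A \<in> class2 omega_times_2 omega_star_times_2"
  shows "(iso A omega_times_2 \<longrightarrow> iso (embed_struc A id) omega_squared) \<and>
    (iso A omega_star_times_2 \<longrightarrow> iso (embed_struc A id) (rev_order omega_squared))"
proof (intro conjI impI)
  have A: "is_structure A"
    using assms unfolding class2_def by blast
  have L: "is_structure omega_times_2" "is_structure omega_star_times_2"
    using linear_omega_times_2 linear_omega_star_times_2 unfolding linear_struc_def by blast+
  show "iso (embed_struc A id) omega_squared" if iso_A: "iso A omega_times_2"
  proof -
    obtain \<mu> where "inj \<mu>" and "iso (embed_struc A id) (embed_struc omega_times_2 \<mu>)"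
      using iso_embed_struc_if_iso[OF iso_A A L(1) fst_omega_times_2] .
    then show ?thesis
      using iso_trans embed_omega_times_2 by metis
  qed
  show "iso (embed_struc A id) (rev_order omega_squared)" if iso_A: "iso A omega_star_times_2"
  proof -
    obtain \<mu> where "inj \<mu>" and "iso (embed_struc A id) (embed_struc omega_star_times_2 \<mu>)"
      using iso_embed_struc_if_iso[OF iso_A A L(2) fst_omega_star_times_2] .
    then show ?thesis
      using iso_trans embed_omega_star_times_2 by metis
  qed
qed

lemma enum_apply_gamma_class2:
  assumes "A \<in> class2 omega_times_2 omega_star_times_2"
  shows "enum_apply (case_prod pair_code ` gamma) (diag A) = diag (embed_struc A id)"
proof (rule enum_apply_gamma)
  show "is_structure A"
    using assms unfolding class2_def by blast
  show "linear_struc (embed_struc A id)"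
    using assms linear_omega_times_2 linear_omega_star_times_2 unfolding class2_def
    by (blast intro: linear_struc_embed_struc linear_struc_iso)
qed

lemma computable_embeddingI:
  assumes "ce W"
    and "\<And>A. A \<in> K0 \<Longrightarrow> \<Phi> A \<in> K1 \<and> is_structure (\<Phi> A) \<and> enum_apply W (diag A) = diag (\<Phi> A)"
    and "\<And>A A'. A \<in> K0 \<Longrightarrow> A' \<in> K0 \<Longrightarrow> iso A A' \<longleftrightarrow> iso (\<Phi> A) (\<Phi> A')"
  shows "computable_embedding W K0 K1"
  unfolding computable_embedding_def
  using assms diag_inj by metis

theorem theorem3p2:
  shows "class2 omega_times_2 omega_star_times_2 \<le>\<^sub>c class2 omega_squared (rev_order omega_squared)"
  unfolding c_leq_def
proof (intro exI computable_embeddingI)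
  show "ce (case_prod pair_code ` gamma)"
    by (rule ce_gamma)
  fix A A' assume A: "A \<in> class2 omega_times_2 omega_star_times_2"
  show "embed_struc A id \<in> class2 omega_squared (rev_order omega_squared) \<and>
      is_structure (embed_struc A id) \<and>
      enum_apply (case_prod pair_code ` gamma) (diag A) = diag (embed_struc A id)"
    using A iso_embed_struc_class2[OF A] embed_struc_structure enum_apply_gamma_class2[OF A]
    unfolding class2_def by blast
  assume "A' \<in> class2 omega_times_2 omega_star_times_2"
  then show "iso A A' \<longleftrightarrow> iso (embed_struc A id) (embed_struc A' id)"
    using iso_iff_if_class2_preserved[OF not_iso_omega_times_2_omega_star_times_2
        not_iso_omega_squared_rev_order iso_embed_struc_class2 A] by simp
qed

end
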